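(* Let $J=\{1,\ldots,n\}$ be a finite set of jobs to be processed on a single machine with preemption allowed, where job $i$ has a release time $r_i\ge 0$ and a processing requirement $p_i>0$. Let $S=[s_1,\ldots,s_n]$ be an ordering of $J$ (a completion sequence). Let $\omega$ be any schedule that has completion sequence $S$, i.e. $C_{s_i,\omega}\le C_{s_j,\omega}$ for all $i<j$. Define the schedule $\mathrm{Pri}_S$ by $\mathrm{Pri}_S(i,t)=1$ if $i$ is the first pending job at time $t$ to appear in $S$, and $\mathrm{Pri}_S(i,t)=0$ otherwise. Then $\mathrm{Pri}_S$ dominates $\omega$: for every job $i\in J$, $C_{i,\mathrm{Pri}_S}\le C_{i,\omega}$.
   Context: A schedule is a function $\omega(i,t)\in[0,1]$ giving the fraction of the single machine's resources allocated to job $i$ at time $t$, with $\sum_i \omega(i,t)\le 1$ for all $t$, $\omega(i,t)=0$ for $t<r_i$. Job $i$ is completed under $\omega$ at the time $C_{i,\omega}$ at which $\int_{r_i}^{C_{i,\omega}}\omega(i,t)\,dt=p_i$. A job is pending at time $t$ if it has been released ($t\ge r_i$) and not yet completed. Schedule $\omega$ dominates schedule $\omega'$ if $C_{i,\omega}\le C_{i,\omega'}$ for every job $i$. *)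

theory Defs
  imports "HOL-Analysis.Analysis"
begin

definition is_schedule :: "'a set \<Rightarrow> ('a \<Rightarrow> real) \<Rightarrow> ('a \<Rightarrow> real \<Rightarrow> real) \<Rightarrow> bool" where
  "is_schedule J r w \<longleftrightarrow>
     (\<forall>i\<in>J. \<forall>t. 0 \<le> w i t \<and> w i t \<le> 1) \<and>
     (\<forall>t. (\<Sum>i\<in>J. w i t) \<le> 1) \<and>
     (\<forall>i\<in>J. \<forall>t. t < r i \<longrightarrow> w i t = 0) \<and>
     (\<forall>i\<in>J. \<forall>a b. (w i) integrable_on {a..b})"

definition work :: "('a \<Rightarrow> real) \<Rightarrow> ('a \<Rightarrow> real \<Rightarrow> real) \<Rightarrow> 'a \<Rightarrow> real \<Rightarrow> real" where
  "work r w i t = integral {r i..t} (w i)"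

definition completion_time ::
  "('a \<Rightarrow> real) \<Rightarrow> ('a \<Rightarrow> real) \<Rightarrow> ('a \<Rightarrow> real \<Rightarrow> real) \<Rightarrow> 'a \<Rightarrow> real" where
  "completion_time r p w i = Inf {t. r i \<le> t \<and> work r w i t = p i}"

definition completes :: "('a \<Rightarrow> real) \<Rightarrow> ('a \<Rightarrow> real) \<Rightarrow> ('a \<Rightarrow> real \<Rightarrow> real) \<Rightarrow> 'a \<Rightarrow> bool" where
  "completes r p w i \<longleftrightarrow> (\<exists>t. r i \<le> t \<and> work r w i t = p i)"

definition pending :: "('a \<Rightarrow> real) \<Rightarrow> ('a \<Rightarrow> real) \<Rightarrow> ('a \<Rightarrow> real \<Rightarrow> real) \<Rightarrow> 'a \<Rightarrow> real \<Rightarrow> bool" where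
  "pending r p w i t \<longleftrightarrow> r i \<le> t \<and> work r w i t < p i"

definition first_pending ::
  "'a list \<Rightarrow> ('a \<Rightarrow> real) \<Rightarrow> ('a \<Rightarrow> real) \<Rightarrow> ('a \<Rightarrow> real \<Rightarrow> real) \<Rightarrow> 'a \<Rightarrow> real \<Rightarrow> bool" where
  "first_pending S r p w i t \<longleftrightarrow>
     (\<exists>k<length S. S ! k = i \<and> pending r p w i t \<and>
        (\<forall>k'<k. \<not> pending r p w (S ! k') t))"

text \<open>w is the schedule Pri_S (a self-referential definition, since pending refers to w).\<close>
definition is_Pri ::
  "'a set \<Rightarrow> 'a list \<Rightarrow> ('a \<Rightarrow> real) \<Rightarrow> ('a \<Rightarrow> real) \<Rightarrow> ('a \<Rightarrow> real \<Rightarrow> real) \<Rightarrow> bool" where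
  "is_Pri J S r p w \<longleftrightarrow> is_schedule J r w \<and>
     (\<forall>i t. w i t = (if first_pending S r p w i t then 1 else 0))"

definition has_completion_sequence ::
  "'a list \<Rightarrow> ('a \<Rightarrow> real) \<Rightarrow> ('a \<Rightarrow> real) \<Rightarrow> ('a \<Rightarrow> real \<Rightarrow> real) \<Rightarrow> bool" where
  "has_completion_sequence S r p w \<longleftrightarrow>
     (\<forall>a b. a < b \<and> b < length S \<longrightarrow>
        completion_time r p w (S ! a) \<le> completion_time r p w (S ! b))"

end

(*
  For every prefix A of S and every time t, Pri_S has given the jobs of A at least as much
  processing as w has, counting w's processing of each job j only up to p j.  Otherwise take
  the last time u before t at which this held: throughout (u, t] some job of A is pending
  under Pri_S, so Pri_S serves A at full rate, whereas w serves A at rate at most 1, and the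
  inequality could not have been lost.  Just after C_{i,w} every job of the prefix ending in i
  is finished under w, hence has received its full requirement under Pri_S as well, because
  Pri_S never serves a completed job.

  Pri_S is defined self-referentially; it exists because jobs later in S never influence
  earlier ones, so it can be built by appending one job at a time.
*)

theory Submission
  imports Defs
begin

lemma integral_vanishing_before:
  fixes f :: "real \<Rightarrow> real"
  assumes "\<And>x. x < r \<Longrightarrow> f x = 0" "s \<le> r"
  shows "integral {m..s} f = 0"
proof -
  have "integral {m..s} f = integral {m..s} (\<lambda>_. 0::real)"
    by (rule integral_spike[of "{r}"]) (use assms in auto)
  then show ?thesis by simp
qed

lemma integral_from_release:
  fixes f :: "real \<Rightarrow> real"
  assumes zero: "\<And>x. x < r \<Longrightarrow> f x = 0" and int: "\<And>a b. f integrable_on {a..b}"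
    and "m \<le> r" "m \<le> s"
  shows "integral {r..s} f = integral {m..s} f"
proof (cases "s \<le> r")
  case True
  then show ?thesis using integral_vanishing_before[OF zero True] by simp
next
  case False
  have "integral {m..r} f + integral {r..s} f = integral {m..s} f"
    by (rule Henstock_Kurzweil_Integration.integral_combine) (use assms False int in auto)
  moreover have "integral {m..r} f = 0" by (rule integral_vanishing_before[OF zero order_refl])
  ultimately show ?thesis by simp
qed

lemma integral_from_release_diff:
  fixes f :: "real \<Rightarrow> real"
  assumes zero: "\<And>x. x < r \<Longrightarrow> f x = 0" and int: "\<And>a b. f integrable_on {a..b}"
    and "u \<le> t"
  shows "integral {r..t} f - integral {r..u} f = integral {u..t} f"
proof -
  define m where "m = min u r"
  have "integral {r..t} f = integral {m..t} f" "integral {r..u} f = integral {m..u} f"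
    using integral_from_release[OF zero int] assms by (auto simp: m_def)
  moreover have "integral {m..u} f + integral {u..t} f = integral {m..t} f"
    by (rule Henstock_Kurzweil_Integration.integral_combine) (use assms int in \<open>auto simp: m_def\<close>)
  ultimately show ?thesis by simp
qed

lemma integral_from_release_continuous:
  fixes f :: "real \<Rightarrow> real"
  assumes zero: "\<And>x. x < r \<Longrightarrow> f x = 0" and int: "\<And>a b. f integrable_on {a..b}"
    and "m \<le> r"
  shows "continuous_on {m..t} (\<lambda>s. integral {r..s} f)"
proof -
  have "continuous_on {m..t} (\<lambda>s. integral {m..s} f)"
    by (rule indefinite_integral_continuous_1[OF int])
  then show ?thesis
    by (rule continuous_on_cong[THEN iffD1, rotated 2])
      (use integral_from_release[OF zero int \<open>m \<le> r\<close>] in auto)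
qed

lemma integral_mono_upper_bound:
  fixes f :: "real \<Rightarrow> real"
  assumes "\<And>x. 0 \<le> f x" "\<And>a b. f integrable_on {a..b}" "u \<le> t"
  shows "integral {a..u} f \<le> integral {a..t} f"
proof (cases "a \<le> u")
  case True
  show ?thesis by (rule integral_subset_le) (use assms True in auto)
next
  case False
  then have "integral {a..u} f = 0" by (simp add: integral_vanishing_before[of u])
  then show ?thesis using assms by (simp add: integral_nonneg)
qed

lemma integral_ge_length:
  fixes f :: "real \<Rightarrow> real"
  assumes int: "f integrable_on {u..t}" and "u \<le> t"
    and ge: "\<And>x. u < x \<Longrightarrow> x \<le> t \<Longrightarrow> 1 \<le> f x"
  shows "t - u \<le> integral {u..t} f"
proof -
  define h where "h x = (if x = u then 1 else f x)" for x
  have "integral {u..t} f = integral {u..t} h"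
    by (rule integral_spike[of "{u}"]) (auto simp: h_def)
  moreover have "h integrable_on {u..t}"
    by (rule integrable_spike[of f _ "{u}"]) (use int in \<open>auto simp: h_def\<close>)
  then have "integral {u..t} (\<lambda>_. 1::real) \<le> integral {u..t} h"
    by (rule integral_le[OF integrable_const_ivl]) (use ge in \<open>auto simp: h_def\<close>)
  ultimately show ?thesis using \<open>u \<le> t\<close> by simp
qed

lemma borel_indicator_integrable_on:
  assumes "E \<in> sets borel"
  shows "(indicator E :: real \<Rightarrow> real) integrable_on {a..b}"
proof -
  have "E \<inter> {a..b} \<in> sets lebesgue" using assms by auto
  then have "E \<inter> {a..b} \<in> lmeasurable"
    by (intro bounded_set_imp_lmeasurable) (auto intro: bounded_subset[OF bounded_closed_interval])
  then show ?thesis by (simp add: integrable_on_indicator)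
qed

lemma is_schedule_rate:
  assumes "is_schedule J r w" "j \<in> J"
  shows "\<And>x. x < r j \<Longrightarrow> w j x = 0" "\<And>a b. w j integrable_on {a..b}" "\<And>x. 0 \<le> w j x"
  using assms unfolding is_schedule_def by auto

lemma work_before_release: "t \<le> r j \<Longrightarrow> work r w j t = 0"
  unfolding work_def by (metis box_real(2) content_real_eq_0 integral_null)

lemma first_pending_snoc:
  "first_pending (xs @ [y]) r p w i t \<longleftrightarrow> first_pending xs r p w i t \<or>
     (i = y \<and> pending r p w y t \<and> (\<forall>k<length xs. \<not> pending r p w (xs ! k) t))"
  (is "?lhs \<longleftrightarrow> ?rhs")
proof
  assume ?lhs
  then obtain k where k: "k < length (xs @ [y])" "(xs @ [y]) ! k = i" "pending r p w i t"
     "\<forall>k'<k. \<not> pending r p w ((xs @ [y]) ! k') t" unfolding first_pending_def by auto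
  show ?rhs
  proof (cases "k = length xs")
    case True
    then show ?thesis using k by (auto simp: nth_append)
  next
    case False
    then show ?thesis using k unfolding first_pending_def
      by (auto simp: nth_append intro!: exI[of _ k])
  qed
next
  assume ?rhs
  then show ?lhs unfolding first_pending_def
    by (elim disjE exE conjE) (auto simp: nth_append intro!: exI)
qed

lemma first_pending_cong:
  assumes "\<forall>j\<in>set S. pending r p w j t = pending r p w' j t"
  shows "first_pending S r p w i t = first_pending S r p w' i t"
  using assms unfolding first_pending_def by (metis nth_mem order.strict_trans)

lemma first_pending_in_set: "first_pending S r p w i t \<Longrightarrow> i \<in> set S"
  unfolding first_pending_def by auto

lemma first_pending_unique:
  assumes "first_pending S r p w i t" "first_pending S r p w j t"
  shows "i = j"
  using assms unfolding first_pending_def by (metis linorder_neqE_nat)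

lemma first_pending_exists:
  assumes "a < length S" "pending r p w (S ! a) t"
  obtains k where "k \<le> a" "first_pending S r p w (S ! k) t"
proof -
  obtain k where k: "pending r p w (S ! k) t \<and> k \<le> a"
      "\<forall>k'<k. \<not> (pending r p w (S ! k') t \<and> k' \<le> a)"
    using exists_least_iff[of "\<lambda>k. pending r p w (S ! k) t \<and> k \<le> a"] assms(2) by blast
  then have "first_pending S r p w (S ! k) t"
    unfolding first_pending_def using assms(1) by (auto intro!: exI[of _ k])
  with k show thesis using that by blast
qed

definition priority_rule ::
  "'a list \<Rightarrow> ('a \<Rightarrow> real) \<Rightarrow> ('a \<Rightarrow> real) \<Rightarrow> ('a \<Rightarrow> real \<Rightarrow> real) \<Rightarrow> bool" where
  "priority_rule S r p \<sigma> \<longleftrightarrow>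
     (\<forall>i t. \<sigma> i t = (if first_pending S r p \<sigma> i t then 1 else 0)) \<and>
     (\<forall>i a b. \<sigma> i integrable_on {a..b})"

lemma priority_rule_rate:
  assumes "priority_rule S r p \<sigma>"
  shows "\<And>x. x < r i \<Longrightarrow> \<sigma> i x = 0" "\<And>a b. \<sigma> i integrable_on {a..b}"
    "\<And>x. 0 \<le> \<sigma> i x"
  using assms unfolding priority_rule_def first_pending_def pending_def
  by (metis not_le order.refl zero_le_one)+

lemma priority_rule_is_Pri:
  assumes "finite J" and pri: "priority_rule S r p \<sigma>"
  shows "is_Pri J S r p \<sigma>"
proof -
  have eq: "\<sigma> i t = (if first_pending S r p \<sigma> i t then 1 else 0)" for i t
    using pri unfolding priority_rule_def by blast
  have "(\<Sum>i\<in>J. \<sigma> i t) \<le> 1" for t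
  proof (cases "\<exists>i0. first_pending S r p \<sigma> i0 t")
    case True
    then obtain i0 where "first_pending S r p \<sigma> i0 t" by blast
    then have "(\<Sum>i\<in>J. \<sigma> i t) = (\<Sum>i\<in>J. if i = i0 then 1 else 0)"
      using eq first_pending_unique by (metis (full_types))
    then show ?thesis using \<open>finite J\<close> by simp
  next
    case False
    then show ?thesis using eq by simp
  qed
  then show ?thesis
    using priority_rule_rate[OF pri] eq unfolding is_Pri_def is_schedule_def by auto
qed

lemma pending_is_interval:
  assumes "\<And>a b. w j integrable_on {a..b}" "\<And>x. 0 \<le> w j x"
  shows "is_interval {t. pending r p w j t}"
  unfolding is_interval_1
proof (intro ballI allI impI; clarify)
  fix a b x assume "pending r p w j a" "pending r p w j b" "a \<le> x" "x \<le> b"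
  moreover have "work r w j x \<le> work r w j b"
    unfolding work_def by (rule integral_mono_upper_bound) (use assms \<open>x \<le> b\<close> in auto)
  ultimately show "pending r p w j x" unfolding pending_def by auto
qed

lemma indicator_truncation:
  fixes E :: "real set" and a c :: real
  assumes E: "E \<in> sets borel"
  defines "\<Phi> \<equiv> \<lambda>t. integral {a..t} (indicator E :: real \<Rightarrow> real)"
  defines "K \<equiv> {t. a \<le> t \<and> \<Phi> t < c}"
  shows indicator_truncation_integrable: "(indicator (E \<inter> K) :: real \<Rightarrow> real) integrable_on {x..y}"
    and indicator_truncation_less_iff:
      "a \<le> t \<Longrightarrow> integral {a..t} (indicator (E \<inter> K) :: real \<Rightarrow> real) < c \<longleftrightarrow> \<Phi> t < c"
proof -
  define g :: "real \<Rightarrow> real" where "g = indicator (E \<inter> K)"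
  have E_int: "(indicator E :: real \<Rightarrow> real) integrable_on {x..y}" for x y
    by (rule borel_indicator_integrable_on[OF E])
  have \<Phi>_mono: "\<Phi> u \<le> \<Phi> t" if "u \<le> t" for u t
    unfolding \<Phi>_def by (rule integral_mono_upper_bound) (use E_int that in auto)
  have "is_interval K" unfolding is_interval_1 K_def using \<Phi>_mono by fastforce
  then have "E \<inter> K \<in> sets borel" using E real_interval_borel_measurable by blast
  then show g_int: "g integrable_on {x..y}" for x y
    unfolding g_def by (rule borel_indicator_integrable_on)
  have g_eq: "integral {a..t} g = \<Phi> t" if "\<Phi> t < c" for t
  proof -
    have "integral {a..t} g = integral {a..t} (indicator E)"
    proof (rule integral_spike[of "{}"])
      fix x assume "x \<in> {a..t} - {}"
      then have "x \<in> K" using \<Phi>_mono[of x t] that unfolding K_def by auto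
      then show "indicator E x = g x" unfolding g_def by (simp add: indicator_def)
    qed simp
    then show ?thesis unfolding \<Phi>_def by simp
  qed
  show "integral {a..t} g < c \<longleftrightarrow> \<Phi> t < c" if "a \<le> t" for t
  proof
    assume less: "integral {a..t} g < c"
    show "\<Phi> t < c"
    proof (rule ccontr)
      assume "\<not> \<Phi> t < c"
      \<comment> \<open>By the IVT \<Phi> reaches c' < c at some s \<le> t; up to s, g agrees with the indicator of E.\<close>
      define c' where "c' = (integral {a..t} g + c) / 2"
      have "0 \<le> integral {a..t} g" by (rule integral_nonneg) (use g_int in \<open>auto simp: g_def\<close>)
      moreover have "continuous_on {a..t} \<Phi>"
        unfolding \<Phi>_def by (rule indefinite_integral_continuous_1[OF E_int])
      ultimately obtain s where s: "a \<le> s" "s \<le> t" "\<Phi> s = c'"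
        using IVT'[of \<Phi> a c' t] \<open>a \<le> t\<close> less \<open>\<not> \<Phi> t < c\<close> by (force simp: \<Phi>_def c'_def)
      then have "integral {a..s} g = c'" using g_eq[of s] less by (simp add: c'_def)
      moreover have "integral {a..s} g \<le> integral {a..t} g"
        by (rule integral_mono_upper_bound) (use g_int s in \<open>auto simp: g_def\<close>)
      ultimately show False using less by (simp add: c'_def)
    qed
  qed (use g_eq in simp)
qed

lemma priority_rule_snoc:
  assumes pri: "priority_rule S r p \<sigma>" and y: "y \<notin> set S"
  obtains \<sigma>' where "priority_rule (S @ [y]) r p \<sigma>'"
proof -
  \<comment> \<open>y is served on E, where no job of S is pending, until it has received p y units.\<close>
  define E where "E = {t. \<forall>k<length S. \<not> pending r p \<sigma> (S ! k) t}"
  define K where "K = {t. r y \<le> t \<and> integral {r y..t} (indicator E :: real \<Rightarrow> real) < p y}"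
  define \<sigma>' where "\<sigma>' = \<sigma>(y := indicator (E \<inter> K))"
  have "{t. pending r p \<sigma> j t} \<in> sets borel" for j
    by (rule real_interval_borel_measurable[OF pending_is_interval[OF priority_rule_rate(2,3)[OF pri]]])
  moreover have "E = UNIV - (\<Union>k<length S. {t. pending r p \<sigma> (S ! k) t})" unfolding E_def by auto
  ultimately have E: "E \<in> sets borel" by auto
  have pending_other: "pending r p \<sigma>' j t = pending r p \<sigma> j t" if "j \<noteq> y" for j t
    using that by (simp add: pending_def work_def \<sigma>'_def)
  have pending_y: "pending r p \<sigma>' y t \<longleftrightarrow> t \<in> K" for t
    using indicator_truncation_less_iff[OF E, of "r y" t "p y"]
    unfolding pending_def work_def \<sigma>'_def K_def by auto
  have first_S: "first_pending S r p \<sigma>' i t = first_pending S r p \<sigma> i t" for i t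
    by (rule first_pending_cong) (use pending_other y in metis)
  have "priority_rule (S @ [y]) r p \<sigma>'"
    unfolding priority_rule_def
  proof (intro conjI allI)
    fix i t
    show "\<sigma>' i t = (if first_pending (S @ [y]) r p \<sigma>' i t then 1 else 0)"
    proof (cases "i = y")
      case True
      then have "\<not> first_pending S r p \<sigma> i t" using y first_pending_in_set by metis
      moreover have "pending r p \<sigma>' (S ! k) t = pending r p \<sigma> (S ! k) t" if "k < length S" for k
        using pending_other y nth_mem[OF that] by metis
      ultimately have "first_pending (S @ [y]) r p \<sigma>' y t \<longleftrightarrow> t \<in> E \<inter> K"
        using True unfolding first_pending_snoc first_S E_def pending_y by auto
      then show ?thesis using True by (simp add: \<sigma>'_def)
    next
      case False
      then have "\<sigma>' i t = \<sigma> i t" by (simp add: \<sigma>'_def)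
      then show ?thesis
        using pri False unfolding first_pending_snoc first_S priority_rule_def by simp
    qed
  next
    fix i a b
    show "\<sigma>' i integrable_on {a..b}"
      using indicator_truncation_integrable[OF E] priority_rule_rate(2)[OF pri]
      unfolding \<sigma>'_def K_def by (cases "i = y") auto
  qed
  then show thesis by (rule that)
qed

lemma priority_rule_exists: "distinct S \<Longrightarrow> \<exists>\<sigma>. priority_rule S r p \<sigma>"
proof (induction S rule: rev_induct)
  case Nil
  have "priority_rule [] r p (\<lambda>_ _. 0)" unfolding priority_rule_def first_pending_def by auto
  then show ?case by blast
next
  case (snoc y S)
  then obtain \<sigma> where "priority_rule S r p \<sigma>" by auto
  with snoc.prems show ?case by (auto elim: priority_rule_snoc)
qed

lemma work_le_if_idle_when_done:
  assumes zero: "\<And>x. x < r j \<Longrightarrow> w j x = 0" and int: "\<And>a b. w j integrable_on {a..b}"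
    and nonneg: "\<And>x. 0 \<le> w j x" and idle: "\<And>x. \<not> pending r p w j x \<Longrightarrow> w j x = 0"
    and "0 \<le> p j"
  shows "work r w j t \<le> p j"
proof (rule ccontr)
  assume exceeds: "\<not> work r w j t \<le> p j"
  then have "r j \<le> t" using work_before_release[of t r j w] \<open>0 \<le> p j\<close> by fastforce
  moreover have "continuous_on {r j..t} (work r w j)"
    unfolding work_def by (rule integral_from_release_continuous[OF zero int order_refl])
  ultimately obtain s where s: "r j \<le> s" "s \<le> t" "work r w j s = p j"
    using IVT'[of "work r w j" "r j" "p j" t] work_before_release[of "r j" r j w]
      \<open>0 \<le> p j\<close> exceeds by force
  have "integral {s..t} (w j) = integral {s..t} (\<lambda>_. 0)"
  proof (rule integral_spike[of "{s}"])
    fix x assume x: "x \<in> {s..t} - {s}"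
    have "work r w j s \<le> work r w j x"
      unfolding work_def by (rule integral_mono_upper_bound) (use int nonneg x in auto)
    then show "0 = w j x" using idle s unfolding pending_def by force
  qed simp
  moreover have "work r w j t - work r w j s = integral {s..t} (w j)"
    unfolding work_def by (rule integral_from_release_diff[OF zero int \<open>s \<le> t\<close>])
  ultimately show False using exceeds s by simp
qed

lemma last_nonneg_before_negative:
  fixes H :: "real \<Rightarrow> real"
  assumes "continuous_on {m..t} H" "m \<le> t" "0 \<le> H m" "H t < 0"
  obtains u where "m \<le> u" "u < t" "0 \<le> H u" "\<And>s. u < s \<Longrightarrow> s \<le> t \<Longrightarrow> H s < 0"
proof -
  define Z where "Z = {m..t} \<inter> H -` {0..}"
  have "closed Z" unfolding Z_def by (rule continuous_closed_preimage[OF assms(1)]) auto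
  moreover have "m \<in> Z" using assms(2,3) unfolding Z_def by simp
  moreover have "bdd_above Z" unfolding Z_def by (auto intro: bdd_aboveI[of _ t])
  ultimately have u: "Sup Z \<in> Z" using closed_contains_Sup by blast
  moreover have "H s < 0" if "Sup Z < s" "s \<le> t" for s
    using cSup_upper[OF _ \<open>bdd_above Z\<close>, of s] that u unfolding Z_def by force
  ultimately show thesis
    using that[of "Sup Z"] assms(4) unfolding Z_def by (fastforce simp: order.order_iff_strict)
qed

lemma Pri_busy_on_prefix:
  assumes pri: "is_Pri J S r p \<sigma>" and "a < n" "a < length S" "pending r p \<sigma> (S ! a) s"
  shows "1 \<le> (\<Sum>j\<in>set (take n S). \<sigma> j s)"
proof -
  have eq: "\<sigma> i x = (if first_pending S r p \<sigma> i x then 1 else 0)" for i x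
    using pri unfolding is_Pri_def by blast
  obtain k where "k \<le> a" "first_pending S r p \<sigma> (S ! k) s"
    using first_pending_exists assms(3,4) by blast
  moreover from \<open>k \<le> a\<close> have "S ! k \<in> set (take n S)"
    using assms(2,3) by (auto simp: in_set_conv_nth intro!: exI[of _ k])
  ultimately show ?thesis
    using member_le_sum[of "S ! k" "set (take n S)" "\<lambda>j. \<sigma> j s"] eq by simp
qed

lemma sum_work_increment:
  assumes "is_schedule J r w" "A \<subseteq> J" "finite A" "u \<le> t"
  shows "(\<Sum>j\<in>A. work r w j t - work r w j u) = integral {u..t} (\<lambda>s. \<Sum>j\<in>A. w j s)"
proof -
  have rate: "\<And>x. x < r j \<Longrightarrow> w j x = 0" "\<And>a b. w j integrable_on {a..b}" if "j \<in> A" for j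
    using is_schedule_rate[OF assms(1)] that assms(2) by auto
  have "(\<Sum>j\<in>A. work r w j t - work r w j u) = (\<Sum>j\<in>A. integral {u..t} (w j))"
    unfolding work_def using integral_from_release_diff[OF rate \<open>u \<le> t\<close>] by simp
  also have "\<dots> = integral {u..t} (\<lambda>s. \<Sum>j\<in>A. w j s)"
    by (rule integral_sum[symmetric]) (use assms(3) rate in auto)
  finally show ?thesis .
qed

lemma sum_work_increment_le:
  assumes "finite J" "is_schedule J r w" "A \<subseteq> J" "u \<le> t"
  shows "(\<Sum>j\<in>A. work r w j t - work r w j u) \<le> t - u"
proof -
  have fin: "finite A" using assms(1,3) finite_subset by blast
  have "(\<Sum>j\<in>A. w j s) \<le> 1" for s
  proof -
    have "(\<Sum>j\<in>A. w j s) \<le> (\<Sum>j\<in>J. w j s)"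
      by (rule sum_mono2[OF assms(1,3)]) (use is_schedule_rate[OF assms(2)] in auto)
    also have "\<dots> \<le> 1" using assms(2) unfolding is_schedule_def by auto
    finally show ?thesis .
  qed
  moreover have "(\<lambda>s. \<Sum>j\<in>A. w j s) integrable_on {u..t}"
    by (rule integrable_sum) (use fin is_schedule_rate[OF assms(2)] assms(3) in auto)
  ultimately have "integral {u..t} (\<lambda>s. \<Sum>j\<in>A. w j s) \<le> integral {u..t} (\<lambda>_. 1)"
    by (intro integral_le) auto
  then show ?thesis using sum_work_increment[OF assms(2,3) fin assms(4)] assms(4) by simp
qed

lemma sum_capped_work_increment_le:
  assumes "finite J" and w: "is_schedule J r w" and "A \<subseteq> J" "u \<le> t"
  shows "(\<Sum>j\<in>A. min (p j) (work r w j t)) - (\<Sum>j\<in>A. min (p j) (work r w j u)) \<le> t - u"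
proof -
  have "(\<Sum>j\<in>A. min (p j) (work r w j t) - min (p j) (work r w j u))
      \<le> (\<Sum>j\<in>A. work r w j t - work r w j u)"
  proof (rule sum_mono)
    fix j assume "j \<in> A"
    have "work r w j u \<le> work r w j t" unfolding work_def
      by (rule integral_mono_upper_bound) (use is_schedule_rate[OF w] assms(3,4) \<open>j \<in> A\<close> in auto)
    then show "min (p j) (work r w j t) - min (p j) (work r w j u) \<le> work r w j t - work r w j u"
      by linarith
  qed
  then show ?thesis using sum_work_increment_le[OF assms] by (simp add: sum_subtractf)
qed

lemma sum_work_increment_ge:
  assumes "is_schedule J r w" "A \<subseteq> J" "finite A" "u \<le> t"
    and busy: "\<And>s. u < s \<Longrightarrow> s \<le> t \<Longrightarrow> 1 \<le> (\<Sum>j\<in>A. w j s)"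
  shows "t - u \<le> (\<Sum>j\<in>A. work r w j t - work r w j u)"
  unfolding sum_work_increment[OF assms(1-4)]
  by (rule integral_ge_length[OF integrable_sum \<open>u \<le> t\<close> busy])
    (use assms(2,3) is_schedule_rate[OF assms(1)] in auto)

lemma Pri_busy_while_behind:
  fixes n :: nat
  assumes "set S \<subseteq> J" "is_schedule J r w" and pri: "is_Pri J S r p \<sigma>"
  defines "A \<equiv> set (take n S)"
  assumes behind: "(\<Sum>j\<in>A. work r \<sigma> j s) < (\<Sum>j\<in>A. min (p j) (work r w j s))"
  shows "1 \<le> (\<Sum>j\<in>A. \<sigma> j s)"
proof -
  obtain j where j: "j \<in> A" "work r \<sigma> j s < min (p j) (work r w j s)"
    using behind sum_mono[of A "\<lambda>j. min (p j) (work r w j s)" "\<lambda>j. work r \<sigma> j s"]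
    by (meson not_le)
  have "j \<in> J" using j(1) assms(1) set_take_subset unfolding A_def by fastforce
  have "0 \<le> work r \<sigma> j s" unfolding work_def
    using pri \<open>j \<in> J\<close> by (intro integral_nonneg) (auto simp: is_Pri_def is_schedule_def)
  then have "r j \<le> s" using j(2) work_before_release[of s r j w] by (cases "r j \<le> s") auto
  with j have "pending r p \<sigma> j s" unfolding pending_def by simp
  moreover obtain a where "a < n" "a < length S" "S ! a = j"
    using j(1) unfolding A_def by (auto simp: in_set_conv_nth)
  ultimately show ?thesis unfolding A_def by (blast intro: Pri_busy_on_prefix[OF pri])
qed

lemma Pri_prefix_dominates:
  fixes n :: nat
  assumes "finite J" "set S \<subseteq> J" and w: "is_schedule J r w" and pri: "is_Pri J S r p \<sigma>"
  defines "A \<equiv> set (take n S)"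
  shows "(\<Sum>j\<in>A. min (p j) (work r w j t)) \<le> (\<Sum>j\<in>A. work r \<sigma> j t)"
proof (rule ccontr)
  define H where "H s = (\<Sum>j\<in>A. work r \<sigma> j s) - (\<Sum>j\<in>A. min (p j) (work r w j s))" for s
  assume "\<not> ?thesis"
  then have "H t < 0" unfolding H_def by simp
  have A: "A \<subseteq> J" "finite A" unfolding A_def using assms(2) set_take_subset by fastforce+
  have \<sigma>: "is_schedule J r \<sigma>" using pri unfolding is_Pri_def by simp
  define m where "m = Min (insert t (r ` A))"
  have m: "m \<le> t" "\<And>j. j \<in> A \<Longrightarrow> m \<le> r j" unfolding m_def using A(2) by auto
  have cont: "continuous_on {m..t} (work r v j)" if "is_schedule J r v" "j \<in> A" for v j
    unfolding work_def
    by (rule integral_from_release_continuous[OF is_schedule_rate(1,2)[OF that(1)] m(2)])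
      (use A(1) that(2) in auto)
  have H_cont: "continuous_on {m..t} H"
    unfolding H_def by (intro continuous_intros cont[OF w] cont[OF \<sigma>])
  have "work r v j m = 0" if "j \<in> A" for v j
    using m(2)[OF that] by (rule work_before_release)
  then have "(\<Sum>j\<in>A. work r \<sigma> j m) = 0" "(\<Sum>j\<in>A. min (p j) (work r w j m)) \<le> 0"
    by (simp, intro sum_nonpos) simp
  then have H_m: "0 \<le> H m" unfolding H_def by simp
  obtain u where u: "m \<le> u" "u < t" "0 \<le> H u"
      and behind: "\<And>s. u < s \<Longrightarrow> s \<le> t \<Longrightarrow> H s < 0"
    using last_nonneg_before_negative[OF H_cont m(1) H_m \<open>H t < 0\<close>] by blast
  have "1 \<le> (\<Sum>j\<in>A. \<sigma> j s)" if "u < s" "s \<le> t" for s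
    using Pri_busy_while_behind[OF assms(2) w pri] behind[OF that] unfolding A_def H_def by simp
  then have "t - u \<le> (\<Sum>j\<in>A. work r \<sigma> j t - work r \<sigma> j u)"
    using sum_work_increment_ge[OF \<sigma> A] u(2) by simp
  moreover have "(\<Sum>j\<in>A. min (p j) (work r w j t)) - (\<Sum>j\<in>A. min (p j) (work r w j u)) \<le> t - u"
    using sum_capped_work_increment_le[OF assms(1) w A(1)] u(2) by simp
  ultimately show False
    using u(3) \<open>H t < 0\<close> unfolding H_def sum_subtractf by linarith
qed

lemma Pri_idle_unless_pending: "is_Pri J S r p \<sigma> \<Longrightarrow> \<not> pending r p \<sigma> j t \<Longrightarrow> \<sigma> j t = 0"
  unfolding is_Pri_def first_pending_def by auto

lemma Pri_completes_with_prefix: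
  fixes n :: nat
  assumes "finite J" "set S \<subseteq> J" "is_schedule J r w" and pri: "is_Pri J S r p \<sigma>"
    and "\<forall>j\<in>J. 0 \<le> p j"
  defines "A \<equiv> set (take n S)"
  assumes finished: "\<forall>j\<in>A. p j \<le> work r w j t" and "i \<in> A"
  shows "work r \<sigma> i t = p i"
proof -
  have A: "A \<subseteq> J" "finite A" unfolding A_def using assms(2) set_take_subset by fastforce+
  have \<sigma>: "is_schedule J r \<sigma>" using pri unfolding is_Pri_def by simp
  have le: "work r \<sigma> j t \<le> p j" if "j \<in> A" for j
  proof -
    have "j \<in> J" using that A(1) by blast
    then show ?thesis
      using work_le_if_idle_when_done[where w=\<sigma> and j=j, OF is_schedule_rate[OF \<sigma>]]
        Pri_idle_unless_pending[OF pri] assms(5) by blast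
  qed
  have "(\<Sum>j\<in>A. p j) = (\<Sum>j\<in>A. min (p j) (work r w j t))"
    using finished by (intro sum.cong) auto
  also have "\<dots> \<le> (\<Sum>j\<in>A. work r \<sigma> j t)"
    unfolding A_def by (rule Pri_prefix_dominates[OF assms(1-3) pri])
  finally have "(\<Sum>j\<in>A. work r \<sigma> j t) = (\<Sum>j\<in>A. p j)"
    using sum_mono[of A "\<lambda>j. work r \<sigma> j t" p] le by fastforce
  then show ?thesis by (rule sum_mono_inv[OF _ le \<open>i \<in> A\<close> A(2)])
qed

lemma release_le_completion_time:
  "completes r p w i \<Longrightarrow> r i \<le> completion_time r p w i"
  unfolding completes_def completion_time_def by (auto intro: cInf_greatest)

lemma work_ge_after_completion_time:
  assumes "is_schedule J r w" "j \<in> J" "completes r p w j" "completion_time r p w j < t"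
  shows "p j \<le> work r w j t"
proof -
  let ?Z = "{t. r j \<le> t \<and> work r w j t = p j}"
  have "?Z \<noteq> {}" using assms(3) unfolding completes_def by blast
  moreover have "bdd_below ?Z" by (rule bdd_belowI[of _ "r j"]) blast
  ultimately obtain z where z: "z \<in> ?Z" "z < t"
    using assms(4) cInf_less_iff[of ?Z t] unfolding completion_time_def by blast
  have "work r w j z \<le> work r w j t" unfolding work_def
    by (rule integral_mono_upper_bound) (use is_schedule_rate[OF assms(1,2)] z in auto)
  then show ?thesis using z by simp
qed

lemma completion_time_le_if_done_after:
  assumes "r i \<le> T" and finished: "\<And>e. 0 < e \<Longrightarrow> work r w i (T + e) = p i"
  shows "completes r p w i" "completion_time r p w i \<le> T"
proof -
  let ?Z = "{t. r i \<le> t \<and> work r w i t = p i}"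
  have Z: "T + e \<in> ?Z" if "0 < e" for e using finished[OF that] assms(1) that by simp
  then show "completes r p w i" unfolding completes_def using zero_less_one by blast
  have "Inf ?Z \<le> T + e" if "0 < e" for e
    by (rule cInf_lower[OF Z[OF that]]) (auto intro: bdd_belowI[of _ "r i"])
  then show "completion_time r p w i \<le> T"
    unfolding completion_time_def by (rule field_le_epsilon)
qed

lemma prefix_finished_after_completion_time:
  assumes "is_schedule J r w" "set S = J" "\<forall>j\<in>J. completes r p w j"
    and "has_completion_sequence S r p w" "k < length S"
    and "j \<in> set (take (Suc k) S)" "completion_time r p w (S ! k) < t"
  shows "p j \<le> work r w j t"
proof -
  have "j \<in> J" using assms(2,6) set_take_subset by fastforce
  moreover have "completion_time r p w j \<le> completion_time r p w (S ! k)"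
    using assms(4-6) unfolding has_completion_sequence_def
    by (auto simp: in_set_conv_nth less_Suc_eq)
  ultimately show ?thesis
    using work_ge_after_completion_time[OF assms(1)] assms(3,7) by simp
qed

theorem mainTheorem1:
  fixes J :: "'a set" and S :: "'a list" and r p :: "'a \<Rightarrow> real"
    and w :: "'a \<Rightarrow> real \<Rightarrow> real"
  assumes "finite J"
    and "distinct S" and "set S = J"
    and "\<forall>i\<in>J. 0 \<le> r i" and "\<forall>i\<in>J. 0 < p i"
    and "is_schedule J r w"
    and "\<forall>i\<in>J. completes r p w i"
    and "has_completion_sequence S r p w"
  shows "(\<exists>\<sigma>. is_Pri J S r p \<sigma>) \<and>
         (\<forall>\<sigma>. is_Pri J S r p \<sigma> \<longrightarrow>
            (\<forall>i\<in>J. completes r p \<sigma> i \<and>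
                     completion_time r p \<sigma> i \<le> completion_time r p w i))"
proof (intro conjI allI impI ballI)
  show "\<exists>\<sigma>. is_Pri J S r p \<sigma>"
    using priority_rule_exists[OF assms(2)] priority_rule_is_Pri[OF assms(1)] by blast
next
  fix \<sigma> i assume pri: "is_Pri J S r p \<sigma>" and "i \<in> J"
  then obtain k where k: "k < length S" "S ! k = i" using assms(3) by (auto simp: in_set_conv_nth)
  define T where "T = completion_time r p w i"
  have i_prefix: "i \<in> set (take (Suc k) S)" using k by (auto simp: in_set_conv_nth)
  have "work r \<sigma> i (T + e) = p i" if "0 < e" for e
    by (rule Pri_completes_with_prefix[OF assms(1) _ assms(6) pri _ _ i_prefix])
      (use assms(3,5) prefix_finished_after_completion_time[OF assms(6,3,7,8) k(1)] k(2) that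
        in \<open>auto simp: T_def less_imp_le\<close>)
  moreover have "r i \<le> T" unfolding T_def using assms(7) \<open>i \<in> J\<close> by (simp add: release_le_completion_time)
  ultimately show "completes r p \<sigma> i" "completion_time r p \<sigma> i \<le> completion_time r p w i"
    using completion_time_le_if_done_after[of r i T \<sigma> p] unfolding T_def by auto
qed

end
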